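(* In the setting below, the curvature $R(a,b)=[\hat\nabla_a,\hat\nabla_b]-\hat\nabla_{\{a,b\}}$ of the preconnection $\hat\nabla$ satisfies, for $v,w,z\in\mathfrak g$ and $f,h,k\in C^\infty(N)$: $$R(v,w)({\rm d}z)=-\tfrac14{\rm d}[[v,w],z],\qquad R(v,w)({\rm d}h)=0,$$ $$R(v,h)({\rm d}z)=R(v,h)({\rm d}k)=0,\qquad R(f,h)({\rm d}z)=R(f,h)({\rm d}k)=0.$$
   Context: A Lie group with Lie algebra $\mathfrak g$ acts on a manifold $N$, with induced (Lie algebra) action $\xi\triangleright f$ on $C^\infty(N)$. On $C^\infty(N)\otimes S(\mathfrak g)\subset C^\infty(N\times\mathfrak g^* )$ the Poisson bracket is determined by $\{f,h\}=0$, $\{v,f\}=v\triangleright f$, $\{v,w\}=[v,w]$ ($f,h\in C^\infty(N)$, $v,w\in\mathfrak g$ viewed as linear functions on $\mathfrak g^*$). $\hat\nabla$ is the preconnection (i.e. $\hat\nabla_a(b\xi)=\{a,b\}\xi+b\hat\nabla_a\xi$, $\hat\nabla_{ab}=a\hat\nabla_b+b\hat\nabla_a$) determined by $\hat\nabla_v{\rm d}w=\frac12{\rm d}[v,w]$, $\hat\nabla_v{\rm d}h={\rm d}(v\triangleright h)$, $\hat\nabla_f{\rm d}w=0$, $\hat\nabla_f{\rm d}h=0$. *)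

theory Defs
  imports Main "HOL.Real_Vector_Spaces"
begin

text \<open>The algebra C^infty(N) tensor S(g), inside
C^infty(N x g*), is modelled by a real commutative algebra A (type 'a); C^infty(N) is a
subset Fn of A; the Lie algebra g is a real vector space 'g with bracket lb, embedded
into A by the linear map iota (elements of g as linear functions on g*); the
1-forms are an A-module 'm with module action smul and universal derivation d.\<close>

definition lie_bracket :: "('g::real_vector \<Rightarrow> 'g \<Rightarrow> 'g) \<Rightarrow> bool" where
  "lie_bracket lb \<longleftrightarrow>
     (\<forall>x y z. lb (x + y) z = lb x z + lb y z) \<and>
     (\<forall>r x y. lb (r *\<^sub>R x) y = r *\<^sub>R lb x y) \<and>
     (\<forall>x y. lb x y = - lb y x) \<and>
     (\<forall>x y z. lb x (lb y z) + lb y (lb z x) + lb z (lb x y) = 0)"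

definition poisson_bracket :: "('a::{real_algebra_1,comm_ring_1} \<Rightarrow> 'a \<Rightarrow> 'a) \<Rightarrow> bool" where
  "poisson_bracket pb \<longleftrightarrow>
     (\<forall>a b c. pb (a + b) c = pb a c + pb b c) \<and>
     (\<forall>r a b. pb (r *\<^sub>R a) b = r *\<^sub>R pb a b) \<and>
     (\<forall>a b. pb a b = - pb b a) \<and>
     (\<forall>a b c. pb a (pb b c) + pb b (pb c a) + pb c (pb a b) = 0) \<and>
     (\<forall>a b c. pb a (b * c) = pb a b * c + b * pb a c)"

definition module_over :: "('a::{real_algebra_1,comm_ring_1} \<Rightarrow> 'm::ab_group_add \<Rightarrow> 'm) \<Rightarrow> bool" where
  "module_over smul \<longleftrightarrow>
     (\<forall>a b m. smul (a * b) m = smul a (smul b m)) \<and>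
     (\<forall>m. smul 1 m = m) \<and>
     (\<forall>a b m. smul (a + b) m = smul a m + smul b m) \<and>
     (\<forall>a m n. smul a (m + n) = smul a m + smul a n)"

definition derivation_into :: "('a::{real_algebra_1,comm_ring_1} \<Rightarrow> 'm::ab_group_add \<Rightarrow> 'm) \<Rightarrow> ('a \<Rightarrow> 'm) \<Rightarrow> bool" where
  "derivation_into smul d \<longleftrightarrow>
     (\<forall>a b. d (a + b) = d a + d b) \<and>
     (\<forall>r a. d (r *\<^sub>R a) = smul (of_real r) (d a)) \<and>
     (\<forall>a b. d (a * b) = smul a (d b) + smul b (d a))"

definition preconnection ::
  "('a::{real_algebra_1,comm_ring_1} \<Rightarrow> 'a \<Rightarrow> 'a) \<Rightarrow> ('a \<Rightarrow> 'm::ab_group_add \<Rightarrow> 'm) \<Rightarrow> ('a \<Rightarrow> 'm \<Rightarrow> 'm) \<Rightarrow> bool" where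
  "preconnection pb smul nabla \<longleftrightarrow>
     (\<forall>a b xi. nabla (a + b) xi = nabla a xi + nabla b xi) \<and>
     (\<forall>r a xi. nabla (r *\<^sub>R a) xi = smul (of_real r) (nabla a xi)) \<and>
     (\<forall>a xi eta. nabla a (xi + eta) = nabla a xi + nabla a eta) \<and>
     (\<forall>a b xi. nabla a (smul b xi) = smul (pb a b) xi + smul b (nabla a xi)) \<and>
     (\<forall>a b xi. nabla (a * b) xi = smul a (nabla b xi) + smul b (nabla a xi))"

definition curvature ::
  "('a \<Rightarrow> 'a \<Rightarrow> 'a) \<Rightarrow> ('a \<Rightarrow> 'm::ab_group_add \<Rightarrow> 'm) \<Rightarrow> 'a \<Rightarrow> 'a \<Rightarrow> 'm \<Rightarrow> 'm" where
  "curvature pb nabla a b xi = nabla a (nabla b xi) - nabla b (nabla a xi) - nabla (pb a b) xi"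

end

theory Submission
  imports Defs
begin

text \<open>Apart from R(v,w), every term of each curvature vanishes directly by the defining
values of the preconnection and of the brackets. The three terms of R(v,w)(dh) cancel because
v(w h) - w(v h) = [v,w] h, which is the Jacobi identity of the Poisson bracket. In R(v,w)(dz)
the second derivatives give 1/4 d[v,[w,z]] - 1/4 d[w,[v,z]] = 1/4 d[[v,w],z] by the Jacobi
identity of g, and the bracket term subtracts 1/2 d[[v,w],z].\<close>

lemma lie_bracket_minus_right:
  assumes "lie_bracket lb"
  shows "lb x (- y) = - lb x y"
proof -
  have scale: "lb (r *\<^sub>R x) y = r *\<^sub>R lb x y" and anti: "lb x y = - lb y x" for r x y
    using assms unfolding lie_bracket_def by blast+
  have "lb x (- y) = - lb ((-1) *\<^sub>R y) x"
    using anti[of x "- y"] by simp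
  also have "\<dots> = - lb x y"
    using scale[of "-1" y x] anti[of y x] by simp
  finally show ?thesis .
qed

lemma lie_bracket_jacobi_derivation:
  assumes "lie_bracket lb"
  shows "lb x (lb y z) - lb y (lb x z) = lb (lb x y) z"
proof -
  have "lb x (lb y z) + lb y (lb z x) + lb z (lb x y) = 0"
    and "lb z x = - lb x z" and "lb z (lb x y) = - lb (lb x y) z"
    using assms unfolding lie_bracket_def by blast+
  then show ?thesis
    by (simp add: lie_bracket_minus_right[OF assms] algebra_simps eq_neg_iff_add_eq_0)
qed

lemma poisson_bracket_zero_left:
  assumes "poisson_bracket pb"
  shows "pb 0 c = 0"
  using assms unfolding poisson_bracket_def by (metis add_cancel_right_right)

lemma poisson_bracket_minus_right:
  assumes "poisson_bracket pb"
  shows "pb a (- b) = - pb a b"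
proof -
  have add: "pb (a + b) c = pb a c + pb b c" and anti: "pb a b = - pb b a" for a b c
    using assms unfolding poisson_bracket_def by blast+
  have "pb (- b) a + pb b a = 0"
    using add[of "- b" b a] poisson_bracket_zero_left[OF assms] by simp
  then show ?thesis
    using anti[of a "- b"] anti[of a b] by (simp add: add_eq_0_iff)
qed

lemma poisson_bracket_of_real_right:
  assumes "poisson_bracket pb"
  shows "pb a (of_real r) = 0"
proof -
  have scale: "pb (r *\<^sub>R a) b = r *\<^sub>R pb a b" and anti: "pb a b = - pb b a"
    and leibniz: "pb a (b * c) = pb a b * c + b * pb a c" for r a b c
    using assms unfolding poisson_bracket_def by blast+
  have "pb a 1 = 0"
    using leibniz[of a 1 1] by simp
  then have "pb (r *\<^sub>R 1) a = 0"
    using scale[of r 1 a] anti[of 1 a] by simp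
  then show ?thesis
    using anti[of a "of_real r"] by (simp add: of_real_def)
qed

lemma poisson_bracket_jacobi_derivation:
  assumes "poisson_bracket pb"
  shows "pb a (pb b c) - pb b (pb a c) = pb (pb a b) c"
proof -
  have "pb a (pb b c) + pb b (pb c a) + pb c (pb a b) = 0"
    and "pb c a = - pb a c" and "pb c (pb a b) = - pb (pb a b) c"
    using assms unfolding poisson_bracket_def by blast+
  then show ?thesis
    by (simp add: poisson_bracket_minus_right[OF assms] algebra_simps eq_neg_iff_add_eq_0)
qed

lemma module_over_zero_left:
  assumes "module_over smul"
  shows "smul 0 m = 0"
  using assms unfolding module_over_def by (metis add_cancel_right_right)

lemma module_over_zero_right:
  assumes "module_over smul"
  shows "smul a 0 = 0"
  using assms unfolding module_over_def by (metis add_cancel_right_right)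

lemma module_over_diff_left:
  assumes "module_over smul"
  shows "smul (a - b) m = smul a m - smul b m"
proof -
  have "smul (a - b) m + smul b m = smul a m"
    using assms unfolding module_over_def by (metis diff_add_cancel)
  then show ?thesis
    by (simp add: eq_diff_eq)
qed

lemma module_over_diff_right:
  assumes "module_over smul"
  shows "smul a (m - n) = smul a m - smul a n"
proof -
  have "smul a (m - n) + smul a n = smul a m"
    using assms unfolding module_over_def by (metis diff_add_cancel)
  then show ?thesis
    by (simp add: eq_diff_eq)
qed

lemma module_over_of_real_mult:
  assumes "module_over smul"
  shows "smul (of_real r) (smul (of_real s) m) = smul (of_real (r * s)) m"
  using assms unfolding module_over_def by simp

lemma derivation_into_diff:
  assumes "derivation_into smul d"
  shows "d (a - b) = d a - d b"
proof -
  have "d (a - b) + d b = d a"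
    using assms unfolding derivation_into_def by (metis diff_add_cancel)
  then show ?thesis
    by (simp add: eq_diff_eq)
qed

lemma preconnection_zero_left:
  assumes "preconnection pb smul nabla"
  shows "nabla 0 xi = 0"
  using assms unfolding preconnection_def by (metis add_cancel_right_right)

lemma preconnection_zero_right:
  assumes "preconnection pb smul nabla"
  shows "nabla a 0 = 0"
  using assms unfolding preconnection_def by (metis add_cancel_right_right)

lemma preconnection_of_real_right:
  assumes "preconnection pb smul nabla" and "poisson_bracket pb" and "module_over smul"
  shows "nabla a (smul (of_real r) xi) = smul (of_real r) (nabla a xi)"
proof -
  have "smul (pb a (of_real r)) xi = 0"
    using poisson_bracket_of_real_right[OF assms(2)] module_over_zero_left[OF assms(3)] by simp
  then show ?thesis
    using assms(1) unfolding preconnection_def by simp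
qed

lemma curvature_eq_0_if_commuting_parallel:
  assumes "preconnection pb smul nabla"
    and "pb a b = 0" and "nabla a xi = 0" and "nabla b xi = 0"
  shows "curvature pb nabla a b xi = 0"
  using assms(2-) unfolding curvature_def
  by (simp add: preconnection_zero_left[OF assms(1)] preconnection_zero_right[OF assms(1)])

locale poisson_action_preconnection =
  fixes pb :: "'a::{real_algebra_1,comm_ring_1} \<Rightarrow> 'a \<Rightarrow> 'a"
    and lb :: "'g::real_vector \<Rightarrow> 'g \<Rightarrow> 'g"
    and iota :: "'g \<Rightarrow> 'a"
    and Fn :: "'a set"
    and act :: "'g \<Rightarrow> 'a \<Rightarrow> 'a"
    and smul :: "'a \<Rightarrow> 'm::ab_group_add \<Rightarrow> 'm"
    and d :: "'a \<Rightarrow> 'm"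
    and nabla :: "'a \<Rightarrow> 'm \<Rightarrow> 'm"
  assumes lie: "lie_bracket lb"
    and iota_lin: "linear iota"
    and pois: "poisson_bracket pb"
    and act_F: "\<And>v f. f \<in> Fn \<Longrightarrow> act v f \<in> Fn"
    and br_FF: "\<And>f h. f \<in> Fn \<Longrightarrow> h \<in> Fn \<Longrightarrow> pb f h = 0"
    and br_gF: "\<And>v f. f \<in> Fn \<Longrightarrow> pb (iota v) f = act v f"
    and br_gg: "\<And>v w. pb (iota v) (iota w) = iota (lb v w)"
    and modl: "module_over smul"
    and der: "derivation_into smul d"
    and prec: "preconnection pb smul nabla"
    and nab_gg: "\<And>v w. nabla (iota v) (d (iota w)) = smul (of_real (1/2)) (d (iota (lb v w)))"
    and nab_gF: "\<And>v h. h \<in> Fn \<Longrightarrow> nabla (iota v) (d h) = d (act v h)"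
    and nab_Fg: "\<And>f w. f \<in> Fn \<Longrightarrow> nabla f (d (iota w)) = 0"
    and nab_FF: "\<And>f h. f \<in> Fn \<Longrightarrow> h \<in> Fn \<Longrightarrow> nabla f (d h) = 0"
begin

lemma act_lie_bracket:
  assumes "h \<in> Fn"
  shows "act v (act w h) - act w (act v h) = act (lb v w) h"
  using poisson_bracket_jacobi_derivation[OF pois, of "iota v" "iota w" h]
  by (simp add: assms act_F br_gF br_gg)

lemma curvature_iota_iota_d_iota:
  "curvature pb nabla (iota v) (iota w) (d (iota z))
     = smul (of_real (-(1/4))) (d (iota (lb (lb v w) z)))"
proof -
  have second_derivative: "nabla (iota x) (nabla (iota y) (d (iota z)))
      = smul (of_real (1/4)) (d (iota (lb x (lb y z))))" for x y
    by (simp add: nab_gg preconnection_of_real_right[OF prec pois modl]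
        module_over_of_real_mult[OF modl])
  have "curvature pb nabla (iota v) (iota w) (d (iota z))
      = smul (of_real (1/4)) (d (iota (lb v (lb w z))) - d (iota (lb w (lb v z))))
        - smul (of_real (1/2)) (d (iota (lb (lb v w) z)))"
    unfolding curvature_def second_derivative br_gg nab_gg[of "lb v w" z]
    by (simp add: module_over_diff_right[OF modl])
  also have "\<dots> = smul (of_real (1/4) - of_real (1/2)) (d (iota (lb (lb v w) z)))"
    by (simp add: module_over_diff_left[OF modl] lie_bracket_jacobi_derivation[OF lie]
        flip: derivation_into_diff[OF der] linear_diff[OF iota_lin])
  finally show ?thesis
    by (simp flip: of_real_diff)
qed

lemma curvature_iota_iota_d_Fn:
  assumes "h \<in> Fn"
  shows "curvature pb nabla (iota v) (iota w) (d h) = 0"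
  using act_lie_bracket[OF assms, of v w]
  unfolding curvature_def
  by (simp add: assms act_F nab_gF br_gg derivation_into_diff[OF der, symmetric])

lemma curvature_iota_Fn_d_iota:
  assumes "h \<in> Fn"
  shows "curvature pb nabla (iota v) h (d (iota z)) = 0"
  unfolding curvature_def
  by (simp add: assms act_F nab_gg nab_Fg br_gF preconnection_zero_right[OF prec]
      preconnection_of_real_right[OF prec pois modl] module_over_zero_right[OF modl])

lemma curvature_iota_Fn_d_Fn:
  assumes "h \<in> Fn" and "k \<in> Fn"
  shows "curvature pb nabla (iota v) h (d k) = 0"
  unfolding curvature_def
  by (simp add: assms act_F nab_gF nab_FF br_gF preconnection_zero_right[OF prec])

end

theorem proposition6p1p4:
  fixes pb :: "'a::{real_algebra_1,comm_ring_1} \<Rightarrow> 'a \<Rightarrow> 'a"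
    and lb :: "'g::real_vector \<Rightarrow> 'g \<Rightarrow> 'g"
    and iota :: "'g \<Rightarrow> 'a"
    and Fn :: "'a set"
    and act :: "'g \<Rightarrow> 'a \<Rightarrow> 'a"
    and smul :: "'a \<Rightarrow> 'm::ab_group_add \<Rightarrow> 'm"
    and d :: "'a \<Rightarrow> 'm"
    and nabla :: "'a \<Rightarrow> 'm \<Rightarrow> 'm"
  assumes lie: "lie_bracket lb"
    and iota_lin: "linear iota"
    and pois: "poisson_bracket pb"
    and act_F: "\<And>v f. f \<in> Fn \<Longrightarrow> act v f \<in> Fn"
    and br_FF: "\<And>f h. f \<in> Fn \<Longrightarrow> h \<in> Fn \<Longrightarrow> pb f h = 0"
    and br_gF: "\<And>v f. f \<in> Fn \<Longrightarrow> pb (iota v) f = act v f"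
    and br_gg: "\<And>v w. pb (iota v) (iota w) = iota (lb v w)"
    and modl: "module_over smul"
    and der: "derivation_into smul d"
    and prec: "preconnection pb smul nabla"
    and nab_gg: "\<And>v w. nabla (iota v) (d (iota w)) = smul (of_real (1/2)) (d (iota (lb v w)))"
    and nab_gF: "\<And>v h. h \<in> Fn \<Longrightarrow> nabla (iota v) (d h) = d (act v h)"
    and nab_Fg: "\<And>f w. f \<in> Fn \<Longrightarrow> nabla f (d (iota w)) = 0"
    and nab_FF: "\<And>f h. f \<in> Fn \<Longrightarrow> h \<in> Fn \<Longrightarrow> nabla f (d h) = 0"
  shows "\<forall>v w z. \<forall>f\<in>Fn. \<forall>h\<in>Fn. \<forall>k\<in>Fn.
     curvature pb nabla (iota v) (iota w) (d (iota z))
        = smul (of_real (-(1/4))) (d (iota (lb (lb v w) z))) \<and>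
     curvature pb nabla (iota v) (iota w) (d h) = 0 \<and>
     curvature pb nabla (iota v) h (d (iota z)) = 0 \<and>
     curvature pb nabla (iota v) h (d k) = 0 \<and>
     curvature pb nabla f h (d (iota z)) = 0 \<and>
     curvature pb nabla f h (d k) = 0"
proof -
  interpret poisson_action_preconnection pb lb iota Fn act smul d nabla
    by (simp add: poisson_action_preconnection_def assms)
  show ?thesis
    using curvature_iota_iota_d_iota curvature_iota_iota_d_Fn
      curvature_iota_Fn_d_iota curvature_iota_Fn_d_Fn
      curvature_eq_0_if_commuting_parallel[OF prec br_FF nab_Fg nab_Fg]
      curvature_eq_0_if_commuting_parallel[OF prec br_FF nab_FF nab_FF]
    by blast
qed

end
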